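(* Let $(U(s,t))_{s\le t,\ s,t\in\mathbb{R}}$ be the evolution system of a Markov process on $\mathbb{R}^d$, with right generators $A_r^+$ and left generators $A_s^-$. Fix $s\in\mathbb{R}$ and let $f\in\mathcal{D}(A_s^+)$ be such that for some $\delta>0$ we have $f\in\bigcap_{r\in(s-\delta,s]}\mathcal{D}(A_r^+)$. Assume \[\lim_{h\downarrow 0}\ \sup_{r\in(s-\delta,s]}\left\|\frac{U(r,r+h)f-f}{h}-A_r^+f\right\|_\infty=0\] and \[\lim_{h\downarrow 0}\|A_{s-h}^+f-A_s^+f\|_\infty=0.\] Then $f\in\mathcal{D}(A_s^-)$ and $A_s^+f=A_s^-f$.
   Context: Let $(X_t)_{t\in\mathbb{R}}$ be an $\mathbb{R}^d$-valued (time-inhomogeneous) Markov process. Its evolution system is $U(s,t)f(x):=\mathbb{E}(f(X_t)\mid X_s=x)$ for $s\le t$, $f$ bounded Borel; it satisfies $U(s,s)=\mathrm{id}$, $U(s,t)=U(s,r)U(r,t)$ for $s\le r\le t$, positivity and $U(s,t)1=1$. $\|\cdot\|_\infty$ is the uniform norm and $C_\infty(\mathbb{R}^d)$ the continuous functions vanishing at infinity. The right generator at time $s$ is $A_s^+f:=\lim_{h\downarrow0}\frac{U(s,s+h)f-f}{h}$, defined on $\mathcal{D}(A_s^+)$, the set of $f\in C_\infty(\mathbb{R}^d)$ for which this limit exists in $\|\cdot\|_\infty$. The left generator is $A_s^-f:=\lim_{h\downarrow0}\frac{U(s-h,s)f-f}{h}$ on the set $\mathcal{D}(A_s^-)$ of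 $f\in C_\infty(\mathbb{R}^d)$ where this limit exists in $\|\cdot\|_\infty$. *)

theory Defs
  imports "HOL-Analysis.Analysis"
begin

definition bounded_borel :: "('a::euclidean_space \<Rightarrow> real) \<Rightarrow> bool" where
  "bounded_borel f \<longleftrightarrow> bounded (range f) \<and> f \<in> borel_measurable borel"

definition evolution_system ::
  "(real \<Rightarrow> real \<Rightarrow> ('a::euclidean_space \<Rightarrow> real) \<Rightarrow> ('a \<Rightarrow> real)) \<Rightarrow> bool" where
  "evolution_system U \<longleftrightarrow>
     (\<forall>s t f. s \<le> t \<longrightarrow> bounded_borel f \<longrightarrow> bounded_borel (U s t f)) \<and>
     (\<forall>s f. bounded_borel f \<longrightarrow> U s s f = f) \<and>
     (\<forall>s r t f. s \<le> r \<longrightarrow> r \<le> t \<longrightarrow> bounded_borel f \<longrightarrow> U s t f = U s r (U r t f)) \<and>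
     (\<forall>s t f g a b. s \<le> t \<longrightarrow> bounded_borel f \<longrightarrow> bounded_borel g \<longrightarrow>
        U s t (\<lambda>x. a * f x + b * g x) = (\<lambda>x. a * U s t f x + b * U s t g x)) \<and>
     (\<forall>s t f. s \<le> t \<longrightarrow> bounded_borel f \<longrightarrow> (\<forall>x. f x \<ge> 0) \<longrightarrow> (\<forall>x. U s t f x \<ge> 0)) \<and>
     (\<forall>s t. s \<le> t \<longrightarrow> U s t (\<lambda>_. 1) = (\<lambda>_. 1))"

definition C_infty :: "('a::euclidean_space \<Rightarrow> real) set" where
  "C_infty = {f. continuous_on UNIV f \<and> (f \<longlongrightarrow> 0) at_infinity}"

text \<open>Limits in the uniform norm are expressed via uniform_limit over UNIV.\<close>
definition has_right_gen where
  "has_right_gen U s f g \<longleftrightarrow> f \<in> C_infty \<and>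
     uniform_limit UNIV (\<lambda>h x. (U s (s + h) f x - f x) / h) g (at_right 0)"

definition has_left_gen where
  "has_left_gen U s f g \<longleftrightarrow> f \<in> C_infty \<and>
     uniform_limit UNIV (\<lambda>h x. (U (s - h) s f x - f x) / h) g (at_right 0)"

definition dom_right_gen where "dom_right_gen U s = {f. \<exists>g. has_right_gen U s f g}"
definition dom_left_gen where "dom_left_gen U s = {f. \<exists>g. has_left_gen U s f g}"

definition right_gen where "right_gen U s f = (THE g. has_right_gen U s f g)"
definition left_gen where "left_gen U s f = (THE g. has_left_gen U s f g)"

end

theory Submission
  imports Defs
begin

text \<open>The left difference quotient of \<open>U\<close> at \<open>s\<close> with step \<open>h\<close> is the right difference
  quotient at \<open>s - h\<close> with the same step. Uniformity of the right derivative in the base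
  point makes it uniformly close to the right generator at \<open>s - h\<close>, and left continuity of
  \<open>r \<mapsto> A\<^sup>+\<^sub>r f\<close> at \<open>s\<close> carries this to the right generator at \<open>s\<close>.\<close>

lemma uniform_limit_along_diagonal:
  fixes F :: "'i \<Rightarrow> 'r \<Rightarrow> 'x \<Rightarrow> 'b::metric_space"
  assumes lim: "uniform_limit (A \<times> B) (\<lambda>h (r, x). F h r x) (\<lambda>(r, x). G r x) L"
    and in_A: "\<forall>\<^sub>F h in L. \<rho> h \<in> A"
    and lim_diag: "uniform_limit B (\<lambda>h. G (\<rho> h)) g L"
  shows "uniform_limit B (\<lambda>h x. F h (\<rho> h) x) g L"
  unfolding uniform_limit_iff
proof (intro allI impI)
  fix e :: real
  assume "e > 0"
  then have "e / 2 > 0" by simp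
  have close_G: "\<forall>\<^sub>F h in L. \<forall>p\<in>A \<times> B. dist (case p of (r, x) \<Rightarrow> F h r x) (case p of (r, x) \<Rightarrow> G r x) < e / 2"
    using lim \<open>e / 2 > 0\<close> unfolding uniform_limit_iff by blast
  have close_g: "\<forall>\<^sub>F h in L. \<forall>x\<in>B. dist (G (\<rho> h) x) (g x) < e / 2"
    using lim_diag \<open>e / 2 > 0\<close> unfolding uniform_limit_iff by blast
  from close_G close_g in_A show "\<forall>\<^sub>F h in L. \<forall>x\<in>B. dist (F h (\<rho> h) x) (g x) < e"
  proof eventually_elim
    case (elim h)
    show ?case
    proof
      fix x
      assume "x \<in> B"
      with elim have "dist (F h (\<rho> h) x) (G (\<rho> h) x) < e / 2" "dist (G (\<rho> h) x) (g x) < e / 2"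
        by fastforce+
      then show "dist (F h (\<rho> h) x) (g x) < e"
        using dist_triangle[of "F h (\<rho> h) x" "g x" "G (\<rho> h) x"] by linarith
    qed
  qed
qed

lemma left_gen_eqI:
  assumes "has_left_gen U s f g"
  shows "left_gen U s f = g"
  unfolding left_gen_def
proof (rule the_equality)
  fix g'
  assume "has_left_gen U s f g'"
  show "g' = g"
  proof
    fix x
    have "((\<lambda>h. (U (s - h) s f x - f x) / h) \<longlongrightarrow> g' x) (at_right 0)"
         "((\<lambda>h. (U (s - h) s f x - f x) / h) \<longlongrightarrow> g x) (at_right 0)"
      using \<open>has_left_gen U s f g'\<close> assms
      by (auto simp: has_left_gen_def intro: tendsto_uniform_limitI)
    then show "g' x = g x" by (rule tendsto_unique[rotated 1]) simp
  qed
qed (fact assms)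

theorem lemma2p2:
  fixes U :: "real \<Rightarrow> real \<Rightarrow> (real ^ 'd \<Rightarrow> real) \<Rightarrow> (real ^ 'd \<Rightarrow> real)"
    and s \<delta> :: real and f :: "real ^ 'd \<Rightarrow> real"
  assumes "evolution_system U"
    and "f \<in> dom_right_gen U s"
    and "\<delta> > 0"
    and "\<forall>r\<in>{s - \<delta><..s}. f \<in> dom_right_gen U r"
    and "uniform_limit ({s - \<delta><..s} \<times> UNIV)
           (\<lambda>h (r, x). (U r (r + h) f x - f x) / h) (\<lambda>(r, x). right_gen U r f x) (at_right 0)"
    and "uniform_limit UNIV (\<lambda>h. right_gen U (s - h) f) (right_gen U s f) (at_right 0)"
  shows "f \<in> dom_left_gen U s \<and> right_gen U s f = left_gen U s f"
proof -
  have "\<forall>\<^sub>F h in at_right 0. s - h \<in> {s - \<delta><..s}"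
    using eventually_at_right_real[OF \<open>\<delta> > 0\<close>] by (rule eventually_mono) simp
  from uniform_limit_along_diagonal[OF assms(5) this assms(6)]
  have "uniform_limit UNIV (\<lambda>h x. (U (s - h) s f x - f x) / h) (right_gen U s f) (at_right 0)"
    by simp
  moreover have "f \<in> C_infty"
    using assms(2) by (auto simp: dom_right_gen_def has_right_gen_def)
  ultimately have "has_left_gen U s f (right_gen U s f)"
    by (simp add: has_left_gen_def)
  then show ?thesis
    by (auto simp: dom_left_gen_def left_gen_eqI)
qed

end
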